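(* Let $\mathsf{G}$ and $\mathsf{G}'$ be well-formed global types and let $\mathsf{N}$ be a network such that $\vdash \mathsf{N} : \mathsf{G}$ and $\vdash \mathsf{N} : \mathsf{G}'$. Then $\mathcal{S}(\mathsf{G})=\mathcal{S}(\mathsf{G}')$, i.e., the two event structures have the same set of events and the same causality and conflict relations.
   Context: Participants are ranged over by $\mathsf{p},\mathsf{q},\mathsf{r},\mathsf{s}$ and message labels by $\lambda$. All processes and global types below are defined coinductively and are assumed regular (finitely many distinct subterms). Processes: $P ::= \bigoplus_{i\in I}\mathsf{p}!\lambda_i;P_i \mid \sum_{i\in I}\mathsf{p}?\lambda_i;P_i \mid \mathbf{0}$, with $I$ finite non-empty and the $\lambda_i$ pairwise distinct. A network is $\mathsf{N}=\mathsf{p}_1[\![P_1]\!]\parallel\cdots\parallel\mathsf{p}_n[\![P_n]\!]$ with $n\ge 1$ and the $\mathsf{p}_h$ pairwise distinct. Global types: $\mathsf{G} ::= \mathsf{p}\to\mathsf{q}:\{\lambda_i;\mathsf{G}_i\}_{i\in I} \mid \mathsf{End}$, with $I$ finite non-empty and the $\lambda_i$ pairwise distinct. A communication is $\alpha=\mathsf{p}\mathsf{q}\lambda$ (meaning $\mathsf{p}$ sends $\lambda$ to $\mathsf{q}$), with $\mathrm{part}(\mathsf{p}\mathsf{q}\lambda)=\{\mathsf{p},\mathsf{q}\}$; a trace is a finite sequence of communications, $\mathrm{part}$ extended to traces by union. The traces of a global type are: $\mathrm{Tr}(\mathsf{End})=\emptyset$ and $\mathrm{Tr}(\mathsf{p}\to\mathsf{q}:\{\lambda_i;\mathsf{G}_i\}_{i\in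 I})=\{\mathsf{p}\mathsf{q}\lambda_i\cdot\sigma \mid i\in I,\ \sigma=\epsilon \text{ or } \sigma\in\mathrm{Tr}(\mathsf{G}_i)\}$. $\mathrm{part}(\mathsf{G})=\bigcup_{\sigma\in\mathrm{Tr}(\mathsf{G})}\mathrm{part}(\sigma)$. Projection (coinductive, partial): $\mathsf{G}\upharpoonright\mathsf{r}=\mathbf{0}$ if $\mathsf{r}\notin\mathrm{part}(\mathsf{G})$; for $\mathsf{G}=\mathsf{p}\to\mathsf{q}:\{\lambda_i;\mathsf{G}_i\}_{i\in I}$: $\mathsf{G}\upharpoonright\mathsf{r}=\sum_{i\in I}\mathsf{p}?\lambda_i;(\mathsf{G}_i\upharpoonright\mathsf{r})$ if $\mathsf{r}=\mathsf{q}$; $=\bigoplus_{i\in I}\mathsf{q}!\lambda_i;(\mathsf{G}_i\upharpoonright\mathsf{r})$ if $\mathsf{r}=\mathsf{p}$; $=\mathsf{G}_1\upharpoonright\mathsf{r}$ if $\mathsf{r}\notin\{\mathsf{p},\mathsf{q}\}$, $\mathsf{r}\in\mathrm{part}(\mathsf{G}_1)$ and $\mathsf{G}_i\upharpoonright\mathsf{r}=\mathsf{G}_1\upharpoonright\mathsf{r}$ for all $i\in I$; undefined otherwise. $\mathsf{G}$ is projectable if $\mathsf{G}\upharpoonright\mathsf{p}$ is defined for all $\mathsf{p}$. Depth: $\mathrm{depth}(\mathsf{p},\sigma)=|\sigma_1\cdot\alpha|$ if $\sigma=\sigma_1\cdot\alpha\cdot\sigma_2$ with $\mathsf{p}\notin\mathrm{part}(\sigma_1)$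 and $\mathsf{p}\in\mathrm{part}(\alpha)$, and $0$ otherwise; $\mathrm{depth}(\mathsf{p},\mathsf{G})=\sup\{\mathrm{depth}(\mathsf{p},\sigma)\mid\sigma\in\mathrm{Tr}(\mathsf{G})\}$. $\mathsf{G}$ is bounded if $\mathrm{depth}(\mathsf{p},\mathsf{G}')$ is finite for every participant $\mathsf{p}$ and every subtree $\mathsf{G}'$ of $\mathsf{G}$. $\mathsf{G}$ is well formed if it is projectable and bounded. Preorder $\le$ on processes: the largest relation such that $\mathbf{0}\le\mathbf{0}$; $\sum_{i\in I\cup J}\mathsf{p}?\lambda_i;P_i\le\sum_{i\in I}\mathsf{p}?\lambda_i;Q_i$ whenever $P_i\le Q_i$ for all $i\in I$; $\bigoplus_{i\in I}\mathsf{p}!\lambda_i;P_i\le\bigoplus_{i\in I}\mathsf{p}!\lambda_i;Q_i$ whenever $P_i\le Q_i$ for all $i\in I$. Typing: $\vdash \prod_{i\in I}\mathsf{p}_i[\![P_i]\!]:\mathsf{G}$ iff $P_i\le\mathsf{G}\upharpoonright\mathsf{p}_i$ for all $i\in I$ and $\mathrm{part}(\mathsf{G})\subseteq\{\mathsf{p}_i\mid i\in I\}$. Event structure of $\mathsf{G}$: permutation equivalence $\sim$ is the least equivalence on traces with $\sigma\cdot\alpha\cdot\alpha'\cdot\sigma'\sim\sigma\cdot\alpha'\cdot\alpha\cdot\sigma'$ whenever $\mathrm{part}(\alpha)\cap\mathrm{part}(\alpha')=\emptyset$; $[\sigma]$ is the class of $\sigma$. A non-empty trace $\sigma=\sigma[1]\cdots\sigma[n]$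 is pointed if for every $1\le i<n$ there is $j$ with $i<j\le n$ and $\mathrm{part}(\sigma[i])\cap\mathrm{part}(\sigma[j])\ne\emptyset$. A g-event is $[\sigma]$ with $\sigma$ pointed. Causal prefixing: $\alpha\circ[\sigma]=[\alpha\cdot\sigma]$ if $\mathrm{part}(\alpha)\cap\mathrm{part}(\sigma)\ne\emptyset$, and $=[\sigma]$ otherwise; $\epsilon\circ\gamma=\gamma$, $(\alpha\cdot\sigma)\circ\gamma=\alpha\circ(\sigma\circ\gamma)$. $\mathrm{ev}(\sigma\cdot\alpha)=\sigma\circ[\alpha]$. Causality: $\gamma\le\gamma'$ if $\gamma=[\sigma]$ and $\gamma'=[\sigma\cdot\sigma']$ for some $\sigma,\sigma'$. Conflict: $\gamma\#\gamma'$ if $\gamma=[\sigma\cdot\mathsf{p}\mathsf{q}\lambda_1\cdot\sigma_1]$ and $\gamma'=[\sigma\cdot\mathsf{p}\mathsf{q}\lambda_2\cdot\sigma_2]$ with $\lambda_1\neq\lambda_2$. Then $\mathcal{S}(\mathsf{G})=(\mathcal{E}(\mathsf{G}),\le_{\mathsf{G}},\#_{\mathsf{G}})$ where $\mathcal{E}(\mathsf{G})=\{\mathrm{ev}(\sigma)\mid\sigma\in\mathrm{Tr}(\mathsf{G})\}$ and $\le_{\mathsf{G}},\#_{\mathsf{G}}$ are the restrictions of $\le,\#$ to $\mathcal{E}(\mathsf{G})$. *)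

theory Defs
  imports Main
begin

text \<open>Branchings \<open>{\<lambda>_i; X_i}_{i \<in> I}\<close> are finite lists of label/continuation pairs;
  non-emptiness and pairwise distinctness of labels are imposed by the
  well-formedness predicates below, together with regularity.\<close>

codatatype ('p, 'l) proc =
    Send 'p "('l \<times> ('p, 'l) proc) list"
  | Recv 'p "('l \<times> ('p, 'l) proc) list"
  | Nil0

codatatype ('p, 'l) gty =
    Comm 'p 'p "('l \<times> ('p, 'l) gty) list"
  | End

definition branching_ok :: "('l \<times> 'a) list \<Rightarrow> bool" where
  "branching_ok bs \<longleftrightarrow> bs \<noteq> [] \<and> distinct (map fst bs)"

inductive psub :: "('p, 'l) proc \<Rightarrow> ('p, 'l) proc \<Rightarrow> bool" where
  psub_refl: "psub P P"
| psub_send: "psub P (Send p bs) \<Longrightarrow> (l, Q) \<in> set bs \<Longrightarrow> psub P Q"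
| psub_recv: "psub P (Recv p bs) \<Longrightarrow> (l, Q) \<in> set bs \<Longrightarrow> psub P Q"

definition proc_ok :: "('p, 'l) proc \<Rightarrow> bool" where
  "proc_ok P \<longleftrightarrow> finite {Q. psub P Q} \<and>
     (\<forall>Q. psub P Q \<longrightarrow> (\<forall>p bs. (Q = Send p bs \<or> Q = Recv p bs) \<longrightarrow> branching_ok bs))"

inductive gsub :: "('p, 'l) gty \<Rightarrow> ('p, 'l) gty \<Rightarrow> bool" where
  gsub_refl: "gsub G G"
| gsub_step: "gsub G (Comm p q bs) \<Longrightarrow> (l, G') \<in> set bs \<Longrightarrow> gsub G G'"

definition gty_ok :: "('p, 'l) gty \<Rightarrow> bool" where
  "gty_ok G \<longleftrightarrow> finite {G'. gsub G G'} \<and>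
     (\<forall>p q bs. gsub G (Comm p q bs) \<longrightarrow> p \<noteq> q \<and> branching_ok bs)"

type_synonym ('p, 'l) comm = "'p \<times> 'p \<times> 'l"

definition partc :: "('p, 'l) comm \<Rightarrow> 'p set" where
  "partc a = {fst a, fst (snd a)}"

definition partt :: "('p, 'l) comm list \<Rightarrow> 'p set" where
  "partt \<sigma> = (\<Union>a\<in>set \<sigma>. partc a)"

inductive is_trace :: "('p, 'l) gty \<Rightarrow> ('p, 'l) comm list \<Rightarrow> bool" where
  tr_one: "G = Comm p q bs \<Longrightarrow> (l, Gi) \<in> set bs \<Longrightarrow> is_trace G [(p, q, l)]"
| tr_cons: "G = Comm p q bs \<Longrightarrow> (l, Gi) \<in> set bs \<Longrightarrow> is_trace Gi \<sigma> \<Longrightarrow> is_trace G ((p, q, l) # \<sigma>)"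

definition Tr :: "('p, 'l) gty \<Rightarrow> ('p, 'l) comm list set" where
  "Tr G = {\<sigma>. is_trace G \<sigma>}"

definition partG :: "('p, 'l) gty \<Rightarrow> 'p set" where
  "partG G = (\<Union>\<sigma>\<in>Tr G. partt \<sigma>)"

coinductive proj :: "('p, 'l) gty \<Rightarrow> 'p \<Rightarrow> ('p, 'l) proc \<Rightarrow> bool" where
  proj_none: "r \<notin> partG G \<Longrightarrow> proj G r Nil0"
| proj_recv: "r \<in> partG G \<Longrightarrow> G = Comm p q bs \<Longrightarrow> r = q \<Longrightarrow>
     list_all2 (\<lambda>b c. fst b = fst c \<and> proj (snd b) r (snd c)) bs cs \<Longrightarrow>
     proj G r (Recv p cs)"
| proj_send: "r \<in> partG G \<Longrightarrow> G = Comm p q bs \<Longrightarrow> r = p \<Longrightarrow> r \<noteq> q \<Longrightarrow>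
     list_all2 (\<lambda>b c. fst b = fst c \<and> proj (snd b) r (snd c)) bs cs \<Longrightarrow>
     proj G r (Send q cs)"
| proj_skip: "r \<in> partG G \<Longrightarrow> G = Comm p q bs \<Longrightarrow> r \<notin> {p, q} \<Longrightarrow>
     bs \<noteq> [] \<Longrightarrow> r \<in> partG (snd (hd bs)) \<Longrightarrow>
     (\<forall>b \<in> set bs. proj (snd b) r P) \<Longrightarrow> proj G r P"
  monos list.rel_mono

definition projectable :: "('p, 'l) gty \<Rightarrow> bool" where
  "projectable G \<longleftrightarrow> (\<forall>r. \<exists>P. proj G r P)"

definition depth :: "'p \<Rightarrow> ('p, 'l) comm list \<Rightarrow> nat" where
  "depth r \<sigma> = (if \<exists>i < length \<sigma>. r \<in> partc (\<sigma> ! i)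
      then Suc (LEAST i. i < length \<sigma> \<and> r \<in> partc (\<sigma> ! i)) else 0)"

text \<open>\<open>depth(r, G) = sup {depth r \<sigma> | \<sigma> \<in> Tr G}\<close> is finite iff this set is bounded.\<close>

definition bounded :: "('p, 'l) gty \<Rightarrow> bool" where
  "bounded G \<longleftrightarrow> (\<forall>G' r. gsub G G' \<longrightarrow> bdd_above (depth r ` Tr G'))"

definition well_formed :: "('p, 'l) gty \<Rightarrow> bool" where
  "well_formed G \<longleftrightarrow> gty_ok G \<and> projectable G \<and> bounded G"

coinductive subt :: "('p, 'l) proc \<Rightarrow> ('p, 'l) proc \<Rightarrow> bool" where
  subt_nil: "subt Nil0 Nil0"
| subt_recv: "set (map fst ds) \<subseteq> set (map fst cs) \<Longrightarrow>
     (\<forall>l P Q. (l, P) \<in> set cs \<longrightarrow> (l, Q) \<in> set ds \<longrightarrow> subt P Q) \<Longrightarrow>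
     subt (Recv p cs) (Recv p ds)"
| subt_send: "set (map fst ds) = set (map fst cs) \<Longrightarrow>
     (\<forall>l P Q. (l, P) \<in> set cs \<longrightarrow> (l, Q) \<in> set ds \<longrightarrow> subt P Q) \<Longrightarrow>
     subt (Send p cs) (Send p ds)"

definition network_ok :: "('p \<rightharpoonup> ('p, 'l) proc) \<Rightarrow> bool" where
  "network_ok N \<longleftrightarrow> finite (dom N) \<and> dom N \<noteq> {} \<and> (\<forall>p P. N p = Some P \<longrightarrow> proc_ok P)"

definition typed :: "('p \<rightharpoonup> ('p, 'l) proc) \<Rightarrow> ('p, 'l) gty \<Rightarrow> bool" where
  "typed N G \<longleftrightarrow> (\<forall>p P. N p = Some P \<longrightarrow> (\<exists>Q. proj G p Q \<and> subt P Q)) \<and> partG G \<subseteq> dom N"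

inductive swap1 :: "('p, 'l) comm list \<Rightarrow> ('p, 'l) comm list \<Rightarrow> bool" where
  "partc a \<inter> partc b = {} \<Longrightarrow> swap1 (\<sigma> @ a # b # \<sigma>') (\<sigma> @ b # a # \<sigma>')"

definition perm_eq :: "('p, 'l) comm list \<Rightarrow> ('p, 'l) comm list \<Rightarrow> bool" where
  "perm_eq = equivclp swap1"

definition cls :: "('p, 'l) comm list \<Rightarrow> ('p, 'l) comm list set" where
  "cls \<sigma> = {\<tau>. perm_eq \<sigma> \<tau>}"

definition pointed :: "('p, 'l) comm list \<Rightarrow> bool" where
  "pointed \<sigma> \<longleftrightarrow> \<sigma> \<noteq> [] \<and>
     (\<forall>i. Suc i < length \<sigma> \<longrightarrow> (\<exists>j. i < j \<and> j < length \<sigma> \<and> partc (\<sigma> ! i) \<inter> partc (\<sigma> ! j) \<noteq> {}))"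

definition g_event :: "('p, 'l) comm list set \<Rightarrow> bool" where
  "g_event \<gamma> \<longleftrightarrow> (\<exists>\<sigma>. pointed \<sigma> \<and> \<gamma> = cls \<sigma>)"

text \<open>Causal prefixing on classes; on a class all representatives have the same participants.\<close>

definition cpre :: "('p, 'l) comm \<Rightarrow> ('p, 'l) comm list set \<Rightarrow> ('p, 'l) comm list set" where
  "cpre a \<gamma> = (if \<exists>\<sigma>. \<gamma> = cls \<sigma> \<and> partc a \<inter> partt \<sigma> \<noteq> {}
      then cls (a # (SOME \<sigma>. \<gamma> = cls \<sigma>)) else \<gamma>)"

fun cpres :: "('p, 'l) comm list \<Rightarrow> ('p, 'l) comm list set \<Rightarrow> ('p, 'l) comm list set" where
  "cpres [] \<gamma> = \<gamma>"
| "cpres (a # \<sigma>) \<gamma> = cpre a (cpres \<sigma> \<gamma>)"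

definition ev :: "('p, 'l) comm list \<Rightarrow> ('p, 'l) comm list set" where
  "ev \<sigma> = cpres (butlast \<sigma>) (cls [last \<sigma>])"

definition causal :: "('p, 'l) comm list set \<Rightarrow> ('p, 'l) comm list set \<Rightarrow> bool" where
  "causal \<gamma> \<gamma>' \<longleftrightarrow> (\<exists>\<sigma> \<sigma>'. \<gamma> = cls \<sigma> \<and> \<gamma>' = cls (\<sigma> @ \<sigma>'))"

definition conflict :: "('p, 'l) comm list set \<Rightarrow> ('p, 'l) comm list set \<Rightarrow> bool" where
  "conflict \<gamma> \<gamma>' \<longleftrightarrow> (\<exists>\<sigma> p q l1 l2 \<sigma>1 \<sigma>2. l1 \<noteq> l2 \<and>
      \<gamma> = cls (\<sigma> @ (p, q, l1) # \<sigma>1) \<and> \<gamma>' = cls (\<sigma> @ (p, q, l2) # \<sigma>2))"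

definition events :: "('p, 'l) gty \<Rightarrow> ('p, 'l) comm list set set" where
  "events G = ev ` Tr G"

definition evstruct :: "('p, 'l) gty \<Rightarrow>
    ('p, 'l) comm list set set \<times> ('p, 'l) comm list set rel \<times> ('p, 'l) comm list set rel" where
  "evstruct G = (events G,
     {(x, y). x \<in> events G \<and> y \<in> events G \<and> causal x y},
     {(x, y). x \<in> events G \<and> y \<in> events G \<and> conflict x y})"

end

theory Submission
  imports Defs
begin

text \<open>The event of a trace is the permutation class of its causal core, the subsequence of
  communications on which its last communication causally depends.  So it suffices to match every
  trace \<open>\<sigma>\<close> of \<open>G\<close> by a trace of \<open>G'\<close> with a permutation-equivalent core.  As \<open>N\<close> is typed
  by \<open>G\<close>, \<open>\<sigma>\<close> is a run of \<open>N\<close>; and every run \<open>\<rho>\<close> of \<open>N\<close> is matched by a trace of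
  \<open>G' = s \<rightarrow> t: {\<lambda>\<^sub>i; G\<^sub>i}\<close>.  Typing forces \<open>s\<close> to offer a send to \<open>t\<close> and \<open>t\<close> to
  await \<open>s\<close>.  If \<open>\<rho>\<close> does not involve \<open>s, t\<close>, it is still a run after firing any branch, and
  boundedness of \<open>G'\<close> guarantees that the first participant of \<open>\<rho>\<close> is met after finitely many such
  skips.  Otherwise the first communication of \<open>\<rho>\<close> involving \<open>s\<close> or \<open>t\<close> is some \<open>s t \<lambda>\<^sub>i\<close>;
  it commutes to the front, changing the core only up to permutation, and the rest of \<open>\<rho>\<close> is matched in
  \<open>G\<^sub>i\<close>.\<close>

section \<open>Permutation equivalence\<close>

lemma partt_Nil [simp]: "partt [] = {}"
  by (simp add: partt_def)

lemma partt_Cons [simp]: "partt (a # x) = partc a \<union> partt x"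
  by (simp add: partt_def)

lemma partt_append [simp]: "partt (x @ y) = partt x \<union> partt y"
  by (simp add: partt_def)

lemma partc_triple [simp]: "partc (s, t, l) = {s, t}"
  by (simp add: partc_def)

lemma swap1_partt: "swap1 x y \<Longrightarrow> partt x = partt y"
  by (induction rule: swap1.induct) auto

lemma perm_eq_partt: "perm_eq x y \<Longrightarrow> partt x = partt y"
  unfolding perm_eq_def by (induction rule: equivclp_induct) (auto dest: swap1_partt)

lemma perm_eq_refl [simp]: "perm_eq x x"
  by (simp add: perm_eq_def)

lemma perm_eq_sym [sym]: "perm_eq x y \<Longrightarrow> perm_eq y x"
  unfolding perm_eq_def by (rule equivclp_sym)

lemma perm_eq_trans [trans]: "perm_eq x y \<Longrightarrow> perm_eq y z \<Longrightarrow> perm_eq x z"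
  unfolding perm_eq_def by (rule equivclp_trans)

lemma swap1_Cons: "swap1 x y \<Longrightarrow> swap1 (a # x) (a # y)"
  by (induction rule: swap1.induct) (metis append_Cons swap1.intros)

lemma perm_eq_Cons: "perm_eq x y \<Longrightarrow> perm_eq (a # x) (a # y)"
  unfolding perm_eq_def
  by (induction rule: equivclp_induct) (auto intro: equivclp_into_equivclp swap1_Cons)

lemma perm_eq_swap: "partc a \<inter> partc b = {} \<Longrightarrow> perm_eq (a # b # x) (b # a # x)"
  unfolding perm_eq_def using swap1.intros[of a b "[]" x] by auto

lemma cls_eq_iff: "cls x = cls y \<longleftrightarrow> perm_eq x y"
  unfolding cls_def by (auto intro: perm_eq_trans perm_eq_sym)

section \<open>Causal cores\<close>

definition causal_cons :: "('p, 'l) comm \<Rightarrow> ('p, 'l) comm list \<Rightarrow> ('p, 'l) comm list" where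
  "causal_cons a c = (if partc a \<inter> partt c \<noteq> {} then a # c else c)"

fun causal_core :: "('p, 'l) comm list \<Rightarrow> ('p, 'l) comm list" where
  "causal_core [] = []"
| "causal_core [a] = [a]"
| "causal_core (a # b # w) = causal_cons a (causal_core (b # w))"

lemma causal_core_Cons: "w \<noteq> [] \<Longrightarrow> causal_core (a # w) = causal_cons a (causal_core w)"
  by (cases w) auto

lemma cpre_cls: "cpre a (cls c) = cls (causal_cons a c)"
proof -
  have "(\<exists>\<sigma>. cls c = cls \<sigma> \<and> partc a \<inter> partt \<sigma> \<noteq> {}) \<longleftrightarrow> partc a \<inter> partt c \<noteq> {}"
    by (metis cls_eq_iff perm_eq_partt)
  moreover have "perm_eq c (SOME \<sigma>. cls c = cls \<sigma>)"
    using someI[of "\<lambda>\<sigma>. cls c = cls \<sigma>" c] by (simp add: cls_eq_iff)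
  then have "cls (a # (SOME \<sigma>. cls c = cls \<sigma>)) = cls (a # c)"
    by (simp add: cls_eq_iff perm_eq_Cons perm_eq_sym)
  ultimately show ?thesis
    unfolding cpre_def causal_cons_def by simp
qed

lemma cpres_cls_singleton: "cpres xs (cls [x]) = cls (causal_core (xs @ [x]))"
  by (induction xs) (simp_all add: cpre_cls causal_core_Cons)

lemma ev_eq_cls_causal_core: "\<sigma> \<noteq> [] \<Longrightarrow> ev \<sigma> = cls (causal_core \<sigma>)"
  unfolding ev_def by (simp add: cpres_cls_singleton)

lemma causal_cons_cong: "perm_eq c c' \<Longrightarrow> perm_eq (causal_cons a c) (causal_cons a c')"
  unfolding causal_cons_def using perm_eq_partt[of c c'] by (auto intro: perm_eq_Cons)

lemma causal_cons_commute:
  "partc a \<inter> partc b = {} \<Longrightarrow> perm_eq (causal_cons a (causal_cons b c)) (causal_cons b (causal_cons a c))"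
  unfolding causal_cons_def by (auto intro: perm_eq_swap)

lemma partt_causal_core_subset: "partt (causal_core x) \<subseteq> partt x"
  by (induction x rule: causal_core.induct) (auto simp: causal_cons_def)

lemma causal_core_snoc_independent: "partt xs \<inter> partc c = {} \<Longrightarrow> causal_core (xs @ [c]) = [c]"
  by (induction xs) (auto simp: causal_core_Cons causal_cons_def)

lemma causal_core_move_to_front:
  assumes "partt r1 \<inter> partc c = {}" and "r2 \<noteq> []"
  shows "perm_eq (causal_core (r1 @ c # r2)) (causal_cons c (causal_core (r1 @ r2)))"
  using assms(1)
proof (induction r1)
  case Nil
  then show ?case using assms(2) by (simp add: causal_core_Cons)
next
  case (Cons a r1)
  have "causal_core ((a # r1) @ c # r2) = causal_cons a (causal_core (r1 @ c # r2))"
    by (simp add: causal_core_Cons)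
  also have "perm_eq \<dots> (causal_cons a (causal_cons c (causal_core (r1 @ r2))))"
    using Cons by (auto intro: causal_cons_cong)
  also have "perm_eq \<dots> (causal_cons c (causal_cons a (causal_core (r1 @ r2))))"
    using Cons.prems by (intro causal_cons_commute) auto
  also have "causal_cons a (causal_core (r1 @ r2)) = causal_core ((a # r1) @ r2)"
    using assms(2) by (simp add: causal_core_Cons)
  finally show ?case by (auto intro: perm_eq_trans)
qed

lemma causal_core_prepend_independent:
  assumes "\<tau> \<noteq> []" and "perm_eq (causal_core \<tau>) (causal_core \<rho>)" and "partc a \<inter> partt \<rho> = {}"
  shows "causal_core (a # \<tau>) = causal_core \<tau>"
proof -
  have "partt (causal_core \<tau>) \<subseteq> partt \<rho>"
    using perm_eq_partt[OF assms(2)] partt_causal_core_subset[of \<rho>] by simp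
  then show ?thesis
    using assms(1,3) by (auto simp: causal_core_Cons causal_cons_def)
qed

lemma causal_core_prepend_moved:
  assumes "partt \<rho>1 \<inter> partc c = {}" and "\<rho>2 \<noteq> []" and "\<tau> \<noteq> []"
    and "perm_eq (causal_core \<tau>) (causal_core (\<rho>1 @ \<rho>2))"
  shows "perm_eq (causal_core (c # \<tau>)) (causal_core (\<rho>1 @ c # \<rho>2))"
proof -
  have "causal_core (c # \<tau>) = causal_cons c (causal_core \<tau>)"
    using assms(3) by (rule causal_core_Cons)
  also have "perm_eq \<dots> (causal_cons c (causal_core (\<rho>1 @ \<rho>2)))"
    using assms(4) by (rule causal_cons_cong)
  also have "perm_eq \<dots> (causal_core (\<rho>1 @ c # \<rho>2))"
    using causal_core_move_to_front[OF assms(1,2)] by (rule perm_eq_sym)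
  finally show ?thesis .
qed

section \<open>Global types and typing\<close>

lemma branch_rel_fst_image:
  "list_all2 (\<lambda>b c. fst b = fst c \<and> R (snd b) (snd c)) bs cs \<Longrightarrow> fst ` set bs = fst ` set cs"
  by (induction rule: list_all2_induct) auto

lemma branch_rel_ex:
  "list_all2 (\<lambda>b c. fst b = fst c \<and> R (snd b) (snd c)) bs cs \<Longrightarrow> (l, x) \<in> set bs \<Longrightarrow>
     \<exists>y. (l, y) \<in> set cs \<and> R x y"
  by (induction rule: list_all2_induct) force+

lemma branch_label_ex: "fst ` set bs \<subseteq> fst ` set cs \<Longrightarrow> (l, x) \<in> set bs \<Longrightarrow> \<exists>y. (l, y) \<in> set cs"
  by force

lemma gsub_branch:
  assumes "(l, G') \<in> set bs" and "gsub G' X"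
  shows "gsub (Comm p q bs) X"
  using assms(2,1) by (induction rule: gsub.induct) (auto intro: gsub.intros)

lemma gty_ok_Comm: "gty_ok (Comm p q bs) \<Longrightarrow> p \<noteq> q \<and> bs \<noteq> []"
  unfolding gty_ok_def branching_ok_def using gsub_refl by blast

lemma gty_ok_branch:
  assumes "gty_ok (Comm p q bs)" and "(l, G') \<in> set bs"
  shows "gty_ok G'"
proof -
  have "{X. gsub G' X} \<subseteq> {X. gsub (Comm p q bs) X}"
    using gsub_branch[OF assms(2)] by blast
  then show ?thesis
    using assms(1) gsub_branch[OF assms(2)] unfolding gty_ok_def by (blast intro: finite_subset)
qed

lemma bounded_branch: "bounded (Comm p q bs) \<Longrightarrow> (l, G') \<in> set bs \<Longrightarrow> bounded G'"
  unfolding bounded_def by (meson gsub_branch)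

lemma trace_not_Nil: "\<sigma> \<in> Tr G \<Longrightarrow> \<sigma> \<noteq> []"
  by (auto simp: Tr_def elim: is_trace.cases)

lemma Tr_Comm_single: "(l, G') \<in> set bs \<Longrightarrow> [(p, q, l)] \<in> Tr (Comm p q bs)"
  unfolding Tr_def by (auto intro: tr_one)

lemma Tr_Comm_Cons: "(l, G') \<in> set bs \<Longrightarrow> \<sigma> \<in> Tr G' \<Longrightarrow> (p, q, l) # \<sigma> \<in> Tr (Comm p q bs)"
  unfolding Tr_def by (auto intro: tr_cons)

lemma partG_End [simp]: "partG End = {}"
  by (auto simp: partG_def Tr_def elim: is_trace.cases)

lemma partG_branch_subset: "(l, G') \<in> set bs \<Longrightarrow> partG G' \<subseteq> partG (Comm p q bs)"
  unfolding partG_def using Tr_Comm_Cons by fastforce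

lemma partG_Comm: "bs \<noteq> [] \<Longrightarrow> p \<in> partG (Comm p q bs) \<and> q \<in> partG (Comm p q bs)"
  unfolding partG_def using Tr_Comm_single[of _ _ bs p q]
  by (cases bs) (fastforce simp: partc_def)+

lemma proj_outside: "proj G r P \<Longrightarrow> r \<notin> partG G \<Longrightarrow> P = Nil0"
  by (auto elim: proj.cases)

lemma proj_Comm_sender:
  "proj (Comm s t bs) s Q \<Longrightarrow> s \<noteq> t \<Longrightarrow> s \<in> partG (Comm s t bs) \<Longrightarrow>
     \<exists>cs. Q = Send t cs \<and> list_all2 (\<lambda>b c. fst b = fst c \<and> proj (snd b) s (snd c)) bs cs"
  by (erule proj.cases) simp_all

lemma proj_Comm_receiver:
  "proj (Comm s t bs) t Q \<Longrightarrow> t \<in> partG (Comm s t bs) \<Longrightarrow>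
     \<exists>cs. Q = Recv s cs \<and> list_all2 (\<lambda>b c. fst b = fst c \<and> proj (snd b) t (snd c)) bs cs"
  by (erule proj.cases) simp_all

lemma proj_Comm_other:
  assumes "proj (Comm s t bs) r Q" and "r \<notin> {s, t}" and "(l, G') \<in> set bs"
  shows "proj G' r Q"
  using assms(1)
proof (cases rule: proj.cases)
  case proj_none
  then show ?thesis
    using partG_branch_subset[OF assms(3)] by (auto intro: proj.proj_none)
qed (use assms in auto)

lemma subt_SendE:
  assumes "subt P (Send t cs)"
  obtains ds where "P = Send t ds" "fst ` set ds = fst ` set cs"
    "\<And>l P' Q'. (l, P') \<in> set ds \<Longrightarrow> (l, Q') \<in> set cs \<Longrightarrow> subt P' Q'"
  using assms by (cases rule: subt.cases) (metis list.set_map)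

lemma subt_RecvE:
  assumes "subt P (Recv s cs)"
  obtains ds where "P = Recv s ds" "fst ` set cs \<subseteq> fst ` set ds"
    "\<And>l P' Q'. (l, P') \<in> set ds \<Longrightarrow> (l, Q') \<in> set cs \<Longrightarrow> subt P' Q'"
  using assms by (cases rule: subt.cases) (metis list.set_map)

lemma subt_Nil0: "subt P Nil0 \<Longrightarrow> P = Nil0"
  by (erule subt.cases) simp_all

lemma typed_residual:
  assumes typed: "typed N (Comm s t bs)" and branch: "(\<mu>, G\<mu>) \<in> set bs"
    and "proj G\<mu> s Qs" "subt P' Qs" and "proj G\<mu> t Qt" "subt P'' Qt"
  shows "typed (N(s \<mapsto> P', t \<mapsto> P'')) G\<mu>"
  unfolding typed_def
proof (intro conjI allI impI)
  fix r P
  assume "(N(s \<mapsto> P', t \<mapsto> P'')) r = Some P"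
  then consider "r = t" "P = P''" | "r = s" "P = P'" | "r \<notin> {s, t}" "N r = Some P"
    by (auto split: if_splits)
  then show "\<exists>Q. proj G\<mu> r Q \<and> subt P Q"
  proof cases
    case 3
    then obtain Q where "proj (Comm s t bs) r Q" "subt P Q"
      using typed 3(2) unfolding typed_def by blast
    then show ?thesis
      using proj_Comm_other[OF _ 3(1) branch] by blast
  qed (use assms in blast)+
next
  show "partG G\<mu> \<subseteq> dom (N(s \<mapsto> P', t \<mapsto> P''))"
    using typed partG_branch_subset[OF branch, of s t] by (auto simp: typed_def)
qed

lemma typed_CommE:
  assumes typed: "typed N (Comm s t bs)" and ok: "gty_ok (Comm s t bs)"
  obtains ds cs where "N s = Some (Send t ds)" "N t = Some (Recv s cs)"
    "fst ` set ds = fst ` set bs" "fst ` set bs \<subseteq> fst ` set cs"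
    "\<And>\<mu> G\<mu> P' P''. (\<mu>, G\<mu>) \<in> set bs \<Longrightarrow> (\<mu>, P') \<in> set ds \<Longrightarrow> (\<mu>, P'') \<in> set cs \<Longrightarrow>
        typed (N(s \<mapsto> P', t \<mapsto> P'')) G\<mu>"
proof -
  let ?G = "Comm s t bs"
  have "s \<noteq> t" "bs \<noteq> []"
    using gty_ok_Comm[OF ok] by auto
  then have in_G: "s \<in> partG ?G" "t \<in> partG ?G"
    using partG_Comm[of bs s t] by auto
  then obtain Ps Pt where Ps: "N s = Some Ps" and Pt: "N t = Some Pt"
    using typed unfolding typed_def by (meson domD subsetD)
  obtain Qs Qt where "proj ?G s Qs" "subt Ps Qs" "proj ?G t Qt" "subt Pt Qt"
    using typed Ps Pt unfolding typed_def by meson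
  then obtain cs1 cs2 where
        s: "subt Ps (Send t cs1)" "list_all2 (\<lambda>b c. fst b = fst c \<and> proj (snd b) s (snd c)) bs cs1"
    and t: "subt Pt (Recv s cs2)" "list_all2 (\<lambda>b c. fst b = fst c \<and> proj (snd b) t (snd c)) bs cs2"
    using proj_Comm_sender[OF _ \<open>s \<noteq> t\<close> in_G(1)] proj_Comm_receiver[OF _ in_G(2)] by blast
  obtain ds where ds: "Ps = Send t ds" "fst ` set ds = fst ` set cs1"
    "\<And>l P' Q'. (l, P') \<in> set ds \<Longrightarrow> (l, Q') \<in> set cs1 \<Longrightarrow> subt P' Q'"
    using subt_SendE[OF s(1)] by blast
  obtain cs where cs: "Pt = Recv s cs" "fst ` set cs2 \<subseteq> fst ` set cs"
    "\<And>l P' Q'. (l, P') \<in> set cs \<Longrightarrow> (l, Q') \<in> set cs2 \<Longrightarrow> subt P' Q'"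
    using subt_RecvE[OF t(1)] by blast
  show ?thesis
  proof (rule that)
    show "N s = Some (Send t ds)" "N t = Some (Recv s cs)"
      using Ps Pt ds(1) cs(1) by simp_all
    show "fst ` set ds = fst ` set bs" "fst ` set bs \<subseteq> fst ` set cs"
      using ds(2) cs(2) branch_rel_fst_image[OF s(2)] branch_rel_fst_image[OF t(2)] by simp_all
  next
    fix \<mu> G\<mu> P' P''
    assume branch: "(\<mu>, G\<mu>) \<in> set bs" and "(\<mu>, P') \<in> set ds" "(\<mu>, P'') \<in> set cs"
    moreover obtain Qs Qt where "(\<mu>, Qs) \<in> set cs1" "proj G\<mu> s Qs" "(\<mu>, Qt) \<in> set cs2" "proj G\<mu> t Qt"
      using branch_rel_ex[OF s(2) branch] branch_rel_ex[OF t(2) branch] by blast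
    ultimately show "typed (N(s \<mapsto> P', t \<mapsto> P'')) G\<mu>"
      using typed_residual[OF typed] ds(3) cs(3) by blast
  qed
qed

section \<open>Runs of a network\<close>

datatype ('p, 'l) action = Out 'p 'l | In 'p 'l

primrec is_path :: "('p, 'l) action list \<Rightarrow> ('p, 'l) proc \<Rightarrow> bool" where
  "is_path [] P = True"
| "is_path (a # w) P = (case a of
     Out q l \<Rightarrow> \<exists>ds P'. P = Send q ds \<and> (l, P') \<in> set ds \<and> is_path w P'
   | In p l \<Rightarrow> \<exists>cs P'. P = Recv p cs \<and> (l, P') \<in> set cs \<and> is_path w P')"

definition local_actions :: "'p \<Rightarrow> ('p, 'l) comm \<Rightarrow> ('p, 'l) action list" where
  "local_actions r c = (case c of (s, t, l) \<Rightarrow>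
     if r = s then [Out t l] else if r = t then [In s l] else [])"

definition local_trace :: "'p \<Rightarrow> ('p, 'l) comm list \<Rightarrow> ('p, 'l) action list" where
  "local_trace r \<rho> = concat (map (local_actions r) \<rho>)"

definition proc_of :: "('p \<rightharpoonup> ('p, 'l) proc) \<Rightarrow> 'p \<Rightarrow> ('p, 'l) proc" where
  "proc_of N r = (case N r of None \<Rightarrow> Nil0 | Some P \<Rightarrow> P)"

text \<open>Communication is synchronous and between distinct participants, so a sequence of
  communications can be executed by \<open>N\<close> iff every participant's local view of it is a path in
  its process (cf. \<open>is_run_Cons_iff\<close>).  Unlike step-by-step execution, this characterisation is
  visibly blind to the order of communications with disjoint participants.\<close>

definition is_run :: "('p \<rightharpoonup> ('p, 'l) proc) \<Rightarrow> ('p, 'l) comm list \<Rightarrow> bool" where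
  "is_run N \<rho> \<longleftrightarrow> (\<forall>r. is_path (local_trace r \<rho>) (proc_of N r))"

lemma local_trace_Nil [simp]: "local_trace r [] = []"
  by (simp add: local_trace_def)

lemma local_trace_Cons [simp]: "local_trace r (c # \<rho>) = local_actions r c @ local_trace r \<rho>"
  by (simp add: local_trace_def)

lemma local_trace_append [simp]: "local_trace r (x @ y) = local_trace r x @ local_trace r y"
  by (simp add: local_trace_def)

lemma local_actions_outside: "r \<notin> partc c \<Longrightarrow> local_actions r c = []"
  by (cases c) (auto simp: local_actions_def partc_def)

lemma local_trace_outside: "r \<notin> partt \<rho> \<Longrightarrow> local_trace r \<rho> = []"
  by (induction \<rho>) (auto simp: local_actions_outside)

lemma proc_of_upd [simp]: "proc_of (N(s \<mapsto> P)) r = (if r = s then P else proc_of N r)"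
  by (simp add: proc_of_def)

lemma proc_of_Some: "proc_of N r = P \<Longrightarrow> P \<noteq> Nil0 \<Longrightarrow> N r = Some P"
  by (auto simp: proc_of_def split: option.splits)

lemma is_run_Nil [simp]: "is_run N []"
  by (simp add: is_run_def)

lemma is_run_Cons_iff:
  assumes "s \<noteq> t"
  shows "is_run N ((s, t, l) # \<rho>) \<longleftrightarrow>
    (\<exists>ds P' cs P''. N s = Some (Send t ds) \<and> (l, P') \<in> set ds \<and>
       N t = Some (Recv s cs) \<and> (l, P'') \<in> set cs \<and> is_run (N(s \<mapsto> P', t \<mapsto> P'')) \<rho>)"
  (is "?run \<longleftrightarrow> ?step")
proof
  assume run: ?run
  have others: "local_trace r ((s, t, l) # \<rho>) = local_trace r \<rho>" if "r \<notin> {s, t}" for r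
    using that by (simp add: local_actions_def)
  have "is_path (local_trace s ((s, t, l) # \<rho>)) (proc_of N s)"
      and "is_path (local_trace t ((s, t, l) # \<rho>)) (proc_of N t)"
    using run unfolding is_run_def by blast+
  then obtain ds P' cs P'' where
        ds: "proc_of N s = Send t ds" "(l, P') \<in> set ds" "is_path (local_trace s \<rho>) P'"
    and cs: "proc_of N t = Recv s cs" "(l, P'') \<in> set cs" "is_path (local_trace t \<rho>) P''"
    using assms by (auto simp: local_actions_def)
  have "is_run (N(s \<mapsto> P', t \<mapsto> P'')) \<rho>"
    unfolding is_run_def
  proof
    fix r
    show "is_path (local_trace r \<rho>) (proc_of (N(s \<mapsto> P', t \<mapsto> P'')) r)"
      using ds(3) cs(3) run[unfolded is_run_def, rule_format, of r] others[of r] by auto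
  qed
  then show ?step
    using ds cs proc_of_Some[OF ds(1)] proc_of_Some[OF cs(1)] by auto
next
  assume ?step
  then obtain ds P' cs P'' where
    "N s = Some (Send t ds)" "(l, P') \<in> set ds" "N t = Some (Recv s cs)" "(l, P'') \<in> set cs"
    and run: "is_run (N(s \<mapsto> P', t \<mapsto> P'')) \<rho>"
    by blast
  then have "is_path (local_trace r ((s, t, l) # \<rho>)) (proc_of N r)" for r
    using assms run[unfolded is_run_def, rule_format, of r]
    by (auto simp: local_actions_def proc_of_def split: if_splits)
  then show ?run
    unfolding is_run_def by blast
qed

lemma is_run_upd_outside:
  assumes "is_run N \<rho>" and "partt \<rho> \<inter> {s, t} = {}"
  shows "is_run (N(s \<mapsto> P', t \<mapsto> P'')) \<rho>"
  unfolding is_run_def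
proof
  fix r
  show "is_path (local_trace r \<rho>) (proc_of (N(s \<mapsto> P', t \<mapsto> P'')) r)"
  proof (cases "r \<in> {s, t}")
    case True
    then have "local_trace r \<rho> = []"
      using assms(2) by (intro local_trace_outside) blast
    then show ?thesis
      by simp
  next
    case False
    then show ?thesis
      using assms(1) unfolding is_run_def by simp
  qed
qed

lemma is_run_move_to_front:
  assumes "is_run N (\<rho>1 @ c # \<rho>2)" and "partt \<rho>1 \<inter> partc c = {}"
  shows "is_run N (c # \<rho>1 @ \<rho>2)"
proof -
  have swap: "local_trace r (\<rho>1 @ c # \<rho>2) = local_trace r (c # \<rho>1 @ \<rho>2)" for r
  proof (cases "r \<in> partc c")
    case True
    then have "local_trace r \<rho>1 = []"
      using assms(2) by (intro local_trace_outside) blast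
    then show ?thesis
      by simp
  next
    case False
    then show ?thesis
      by (simp add: local_actions_outside)
  qed
  show ?thesis
    using assms(1) unfolding is_run_def swap .
qed

lemma is_run_first_involving:
  assumes run: "is_run N \<rho>" and "s \<noteq> t"
    and "N s = Some (Send t ds)" "N t = Some (Recv s cs)" and "partt \<rho> \<inter> {s, t} \<noteq> {}"
  obtains \<rho>1 l \<rho>2 where "\<rho> = \<rho>1 @ (s, t, l) # \<rho>2" "partt \<rho>1 \<inter> {s, t} = {}"
proof -
  have "\<exists>c \<in> set \<rho>. partc c \<inter> {s, t} \<noteq> {}"
    using assms(5) by (auto simp: partt_def)
  then obtain \<rho>1 c \<rho>2 where split: "\<rho> = \<rho>1 @ c # \<rho>2" "partc c \<inter> {s, t} \<noteq> {}"
      and before: "\<forall>c' \<in> set \<rho>1. partc c' \<inter> {s, t} = {}"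
    using split_list_first_prop[of \<rho> "\<lambda>c. partc c \<inter> {s, t} \<noteq> {}"] by blast
  then have \<rho>1: "partt \<rho>1 \<inter> {s, t} = {}"
    by (auto simp: partt_def)
  then have "local_trace s \<rho>1 = []" "local_trace t \<rho>1 = []"
    by (auto intro: local_trace_outside)
  moreover have "is_path (local_trace s \<rho>) (proc_of N s)" "is_path (local_trace t \<rho>) (proc_of N t)"
    using run unfolding is_run_def by blast+
  ultimately have "is_path (local_actions s c @ local_trace s \<rho>2) (Send t ds)"
      and "is_path (local_actions t c @ local_trace t \<rho>2) (Recv s cs)"
    using split(1) assms(3,4) by (simp_all add: proc_of_def)
  then have "c = (s, t, snd (snd c))"
    using split(2) \<open>s \<noteq> t\<close> by (cases c) (auto simp: local_actions_def split: if_splits)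
  then show thesis
    using that split(1) \<rho>1 by metis
qed

lemma is_run_sender_in_partG:
  assumes "is_run N (c # \<rho>)" and "typed N G"
  shows "fst c \<in> partG G"
proof (rule ccontr)
  assume outside: "fst c \<notin> partG G"
  obtain ds where "proc_of N (fst c) = Send (fst (snd c)) ds"
    using assms(1) unfolding is_run_def
    by (cases c) (fastforce simp: local_actions_def dest: spec[of _ "fst c"])
  then have "N (fst c) = Some (Send (fst (snd c)) ds)"
    by (simp add: proc_of_Some)
  then obtain Q where "proj G (fst c) Q" "subt (Send (fst (snd c)) ds) Q"
    using assms(2) unfolding typed_def by blast
  then show False
    using proj_outside[OF _ outside] subt_Nil0 by fastforce
qed

lemma typed_fire:
  assumes "typed N (Comm s t bs)" and "gty_ok (Comm s t bs)" and "(l, G') \<in> set bs"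
  obtains P' P'' where "typed (N(s \<mapsto> P', t \<mapsto> P'')) G'"
    and "\<And>\<rho>. is_run (N(s \<mapsto> P', t \<mapsto> P'')) \<rho> \<Longrightarrow> is_run N ((s, t, l) # \<rho>)"
proof -
  have "s \<noteq> t"
    using gty_ok_Comm[OF assms(2)] by blast
  obtain ds cs where Ns: "N s = Some (Send t ds)" and Nt: "N t = Some (Recv s cs)"
    and labels: "fst ` set ds = fst ` set bs" "fst ` set bs \<subseteq> fst ` set cs"
    and typed: "\<And>\<mu> G\<mu> P' P''. (\<mu>, G\<mu>) \<in> set bs \<Longrightarrow> (\<mu>, P') \<in> set ds \<Longrightarrow> (\<mu>, P'') \<in> set cs \<Longrightarrow>
        typed (N(s \<mapsto> P', t \<mapsto> P'')) G\<mu>"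
    by (rule typed_CommE[OF assms(1,2)]) (rule that)
  obtain P' P'' where P': "(l, P') \<in> set ds" and P'': "(l, P'') \<in> set cs"
    using branch_label_ex[OF equalityD2[OF labels(1)] assms(3)] branch_label_ex[OF labels(2) assms(3)]
    by blast
  show thesis
  proof (rule that)
    show "typed (N(s \<mapsto> P', t \<mapsto> P'')) G'"
      using assms(3) P' P'' by (rule typed)
    show "is_run N ((s, t, l) # \<rho>)" if "is_run (N(s \<mapsto> P', t \<mapsto> P'')) \<rho>" for \<rho>
      unfolding is_run_Cons_iff[OF \<open>s \<noteq> t\<close>] using Ns Nt P' P'' that by blast
  qed
qed

lemma trace_is_run:
  assumes "\<sigma> \<in> Tr G" and "typed N G" and "gty_ok G"
  shows "is_run N \<sigma>"
proof -
  have "is_trace G \<sigma>"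
    using assms(1) by (simp add: Tr_def)
  then show ?thesis
    using assms(2,3)
  proof (induction arbitrary: N rule: is_trace.induct)
    case (tr_one G p q bs l Gi)
    then have "typed N (Comm p q bs)" "gty_ok (Comm p q bs)"
      by simp_all
    then show ?case
    proof (rule typed_fire[OF _ _ tr_one(2)])
      fix P' P''
      assume "typed (N(p \<mapsto> P', q \<mapsto> P'')) Gi"
        and "\<And>\<rho>. is_run (N(p \<mapsto> P', q \<mapsto> P'')) \<rho> \<Longrightarrow> is_run N ((p, q, l) # \<rho>)"
      then show ?thesis
        using is_run_Nil by blast
    qed
  next
    case (tr_cons G p q bs l Gi \<sigma>)
    then have "typed N (Comm p q bs)" and ok: "gty_ok (Comm p q bs)"
      by simp_all
    then show ?case
    proof (rule typed_fire[OF _ _ tr_cons(2)])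
      fix P' P''
      assume "typed (N(p \<mapsto> P', q \<mapsto> P'')) Gi"
        and "\<And>\<rho>. is_run (N(p \<mapsto> P', q \<mapsto> P'')) \<rho> \<Longrightarrow> is_run N ((p, q, l) # \<rho>)"
      then show ?thesis
        using tr_cons.IH gty_ok_branch[OF ok tr_cons(2)] by blast
    qed
  qed
qed

lemma typed_skip:
  assumes "typed N (Comm s t bs)" and "gty_ok (Comm s t bs)"
    and "is_run N \<rho>" and "partt \<rho> \<inter> {s, t} = {}"
  obtains \<mu> G\<mu> N' where "(\<mu>, G\<mu>) \<in> set bs" "typed N' G\<mu>" "is_run N' \<rho>"
proof -
  obtain \<mu> G\<mu> where branch: "(\<mu>, G\<mu>) \<in> set bs"
    using gty_ok_Comm[OF assms(2)] by (cases bs) auto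
  show thesis
  proof (rule typed_fire[OF assms(1,2) branch])
    fix P' P''
    assume "typed (N(s \<mapsto> P', t \<mapsto> P'')) G\<mu>"
    then show thesis
      using that[OF branch] is_run_upd_outside[OF assms(3,4)] by blast
  qed
qed

lemma typed_engage:
  assumes "typed N (Comm s t bs)" and "gty_ok (Comm s t bs)"
    and "is_run N \<rho>" and "partt \<rho> \<inter> {s, t} \<noteq> {}"
  obtains \<rho>1 l \<rho>2 Gl N' where "\<rho> = \<rho>1 @ (s, t, l) # \<rho>2" "partt \<rho>1 \<inter> {s, t} = {}"
    "(l, Gl) \<in> set bs" "typed N' Gl" "is_run N' (\<rho>1 @ \<rho>2)"
proof -
  have "s \<noteq> t"
    using gty_ok_Comm[OF assms(2)] by blast
  obtain ds cs where Ns: "N s = Some (Send t ds)" and Nt: "N t = Some (Recv s cs)"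
    and labels: "fst ` set ds = fst ` set bs" "fst ` set bs \<subseteq> fst ` set cs"
    and typed: "\<And>\<mu> G\<mu> P' P''. (\<mu>, G\<mu>) \<in> set bs \<Longrightarrow> (\<mu>, P') \<in> set ds \<Longrightarrow> (\<mu>, P'') \<in> set cs \<Longrightarrow>
        typed (N(s \<mapsto> P', t \<mapsto> P'')) G\<mu>"
    by (rule typed_CommE[OF assms(1,2)]) (rule that)
  obtain \<rho>1 l \<rho>2 where split: "\<rho> = \<rho>1 @ (s, t, l) # \<rho>2" "partt \<rho>1 \<inter> {s, t} = {}"
    by (rule is_run_first_involving[OF assms(3) \<open>s \<noteq> t\<close> Ns Nt assms(4)])
  then have "is_run N ((s, t, l) # \<rho>1 @ \<rho>2)"
    using is_run_move_to_front[of N \<rho>1 "(s, t, l)" \<rho>2] assms(3) by simp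
  then have "\<exists>P' P''. (l, P') \<in> set ds \<and> (l, P'') \<in> set cs \<and>
      is_run (N(s \<mapsto> P', t \<mapsto> P'')) (\<rho>1 @ \<rho>2)"
    unfolding is_run_Cons_iff[OF \<open>s \<noteq> t\<close>] using Ns Nt by simp
  then obtain P' P'' where P': "(l, P') \<in> set ds" and P'': "(l, P'') \<in> set cs"
      and run: "is_run (N(s \<mapsto> P', t \<mapsto> P'')) (\<rho>1 @ \<rho>2)"
    by blast
  obtain Gl where branch: "(l, Gl) \<in> set bs"
    using branch_label_ex[OF equalityD1[OF labels(1)] P'] by blast
  show thesis
    using that[OF split branch typed[OF branch P' P''] run] .
qed

section \<open>Matching runs by traces\<close>

lemma depth_Cons_outside:
  assumes "r \<notin> partc a"
  shows "depth r (a # \<sigma>) = (if depth r \<sigma> = 0 then 0 else Suc (depth r \<sigma>))"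
proof -
  let ?P = "\<lambda>i. i < length (a # \<sigma>) \<and> r \<in> partc ((a # \<sigma>) ! i)"
  let ?Q = "\<lambda>i. i < length \<sigma> \<and> r \<in> partc (\<sigma> ! i)"
  have shift: "?P (Suc i) = ?Q i" for i
    by simp
  have not0: "\<not> ?P 0"
    using assms by simp
  have ex: "(\<exists>i. ?P i) = (\<exists>i. ?Q i)"
  proof
    assume "\<exists>i. ?P i"
    then obtain i where "?P i" by blast
    then show "\<exists>i. ?Q i"
      using not0 by (cases i) auto
  next
    assume "\<exists>i. ?Q i"
    then show "\<exists>i. ?P i"
      using shift by blast
  qed
  show ?thesis
  proof (cases "\<exists>i. ?Q i")
    case True
    then obtain i where "?Q i" by blast
    then have "?P (Suc i)" by simp
    then have "(LEAST i. ?P i) = Suc (LEAST i. ?P (Suc i))"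
      using not0 by (rule Least_Suc)
    then show ?thesis
      using True ex unfolding depth_def by (simp del: length_Cons nth_Cons_Suc)
  next
    case False
    then show ?thesis
      using ex unfolding depth_def by (auto simp del: nth_Cons_Suc)
  qed
qed

lemma bounded_depth_le: "bounded G \<Longrightarrow> \<exists>n. \<forall>\<sigma>\<in>Tr G. depth r \<sigma> \<le> n"
  unfolding bounded_def bdd_above_def using gsub.gsub_refl by blast

lemma depth_pos: "r \<in> partt \<sigma> \<Longrightarrow> 0 < depth r \<sigma>"
  unfolding partt_def depth_def by (fastforce simp: in_set_conv_nth)

lemma depth_le_branch:
  assumes "\<forall>\<sigma>\<in>Tr (Comm s t bs). depth r \<sigma> \<le> Suc n" and "r \<notin> {s, t}" and "(\<mu>, G\<mu>) \<in> set bs"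
  shows "\<forall>\<sigma>\<in>Tr G\<mu>. depth r \<sigma> \<le> n"
proof
  fix \<sigma>
  assume "\<sigma> \<in> Tr G\<mu>"
  then have "depth r ((s, t, \<mu>) # \<sigma>) \<le> Suc n"
    using assms(1) Tr_Comm_Cons[OF assms(3)] by blast
  then show "depth r \<sigma> \<le> n"
    using depth_Cons_outside[of r "(s, t, \<mu>)" \<sigma>] assms(2) by (auto split: if_splits)
qed

definition matched_by :: "('p, 'l) gty \<Rightarrow> ('p, 'l) comm list \<Rightarrow> bool" where
  "matched_by G \<rho> \<longleftrightarrow> (\<exists>\<tau>\<in>Tr G. perm_eq (causal_core \<tau>) (causal_core \<rho>))"

lemma matched_by_Comm_skip:
  assumes "(\<mu>, G\<mu>) \<in> set bs" and "partt \<rho> \<inter> {s, t} = {}" and "matched_by G\<mu> \<rho>"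
  shows "matched_by (Comm s t bs) \<rho>"
proof -
  obtain \<tau> where \<tau>: "\<tau> \<in> Tr G\<mu>" "perm_eq (causal_core \<tau>) (causal_core \<rho>)"
    using assms(3) unfolding matched_by_def by blast
  have "causal_core ((s, t, \<mu>) # \<tau>) = causal_core \<tau>"
    using causal_core_prepend_independent[OF trace_not_Nil[OF \<tau>(1)] \<tau>(2)] assms(2) by simp
  then show ?thesis
    using Tr_Comm_Cons[OF assms(1) \<tau>(1)] \<tau>(2) unfolding matched_by_def by metis
qed

lemma matched_by_Comm_last:
  assumes "(l, Gl) \<in> set bs" and "partt \<rho>1 \<inter> {s, t} = {}"
  shows "matched_by (Comm s t bs) (\<rho>1 @ [(s, t, l)])"
proof -
  have "causal_core (\<rho>1 @ [(s, t, l)]) = causal_core [(s, t, l)]"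
    using causal_core_snoc_independent[of \<rho>1 "(s, t, l)"] assms(2) by simp
  then show ?thesis
    using Tr_Comm_single[OF assms(1)] unfolding matched_by_def by (metis perm_eq_refl)
qed

lemma matched_by_Comm_engage:
  assumes "(l, Gl) \<in> set bs" and "partt \<rho>1 \<inter> {s, t} = {}" and "\<rho>2 \<noteq> []"
    and "matched_by Gl (\<rho>1 @ \<rho>2)"
  shows "matched_by (Comm s t bs) (\<rho>1 @ (s, t, l) # \<rho>2)"
proof -
  obtain \<tau> where \<tau>: "\<tau> \<in> Tr Gl" "perm_eq (causal_core \<tau>) (causal_core (\<rho>1 @ \<rho>2))"
    using assms(4) unfolding matched_by_def by blast
  have "perm_eq (causal_core ((s, t, l) # \<tau>)) (causal_core (\<rho>1 @ (s, t, l) # \<rho>2))"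
    using causal_core_prepend_moved[OF _ assms(3) trace_not_Nil[OF \<tau>(1)] \<tau>(2)] assms(2) by simp
  then show ?thesis
    using Tr_Comm_Cons[OF assms(1) \<tau>(1)] unfolding matched_by_def by blast
qed

text \<open>The induction is lexicographic: on the length of the run, and for a fixed run on a bound
  for the depth of its first participant, which exists since the global type is bounded.\<close>

lemma run_matched_by_trace:
  assumes "\<rho> \<noteq> []" "is_run N \<rho>" "typed N G" "gty_ok G" "bounded G"
  shows "matched_by G \<rho>"
  using assms
proof (induction "length \<rho>" arbitrary: \<rho> N G rule: less_induct)
  case less
  let ?p = "fst (hd \<rho>)"
  obtain n where "\<forall>\<sigma>\<in>Tr G. depth ?p \<sigma> \<le> n"
    using bounded_depth_le[OF less.prems(5)] by blast
  have sender: "?p \<in> partG G" if "is_run N \<rho>" "typed N G" for N G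
    using is_run_sender_in_partG[of N "hd \<rho>" "tl \<rho>" G] that less.prems(1) by simp
  show ?case
    using \<open>\<forall>\<sigma>\<in>Tr G. depth ?p \<sigma> \<le> n\<close> less.prems(2-)
  proof (induction n arbitrary: N G)
    case 0
    obtain \<sigma> where "\<sigma> \<in> Tr G" "?p \<in> partt \<sigma>"
      using sender[OF "0.prems"(2,3)] unfolding partG_def by blast
    then show ?case
      using "0.prems"(1) depth_pos[of ?p \<sigma>] by auto
  next
    case (Suc n)
    obtain s t bs where G: "G = Comm s t bs"
      using sender[OF Suc.prems(2,3)] by (cases G) auto
    have typed: "typed N (Comm s t bs)" and ok: "gty_ok (Comm s t bs)"
      and bd: "bounded (Comm s t bs)"
      using Suc.prems G by simp_all
    show ?case
    proof (cases "partt \<rho> \<inter> {s, t} = {}")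
      case True
      obtain \<mu> G\<mu> N' where branch: "(\<mu>, G\<mu>) \<in> set bs"
        and typed': "typed N' G\<mu>" and run': "is_run N' \<rho>"
        by (rule typed_skip[OF typed ok Suc.prems(2) True])
      have "?p \<notin> {s, t}"
        using True less.prems(1) by (cases \<rho>) (auto simp: partc_def)
      then have "\<forall>\<sigma>\<in>Tr G\<mu>. depth ?p \<sigma> \<le> n"
        using depth_le_branch[OF _ _ branch] Suc.prems(1) G by blast
      then have "matched_by G\<mu> \<rho>"
        using Suc.IH run' typed' gty_ok_branch[OF ok branch] bounded_branch[OF bd branch] by blast
      then show ?thesis
        using matched_by_Comm_skip[OF branch True] G by simp
    next
      case False
      obtain \<rho>1 l \<rho>2 Gl N' where split: "\<rho> = \<rho>1 @ (s, t, l) # \<rho>2" "partt \<rho>1 \<inter> {s, t} = {}"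
        and branch: "(l, Gl) \<in> set bs" and "typed N' Gl" "is_run N' (\<rho>1 @ \<rho>2)"
        by (rule typed_engage[OF typed ok Suc.prems(2) False])
      show ?thesis
      proof (cases "\<rho>2 = []")
        case True
        then show ?thesis
          using matched_by_Comm_last[OF branch split(2)] split(1) G by simp
      next
        case False
        then have "matched_by Gl (\<rho>1 @ \<rho>2)"
          using less.hyps \<open>typed N' Gl\<close> \<open>is_run N' (\<rho>1 @ \<rho>2)\<close> split(1)
            gty_ok_branch[OF ok branch] bounded_branch[OF bd branch] by simp
        then show ?thesis
          using matched_by_Comm_engage[OF branch split(2) False] split(1) G by simp
      qed
    qed
  qed
qed

lemma events_subset:
  assumes "well_formed G" and "well_formed G'" and "typed N G" and "typed N G'"
  shows "events G \<subseteq> events G'"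
proof
  fix \<gamma>
  assume "\<gamma> \<in> events G"
  then obtain \<sigma> where \<sigma>: "\<sigma> \<in> Tr G" "\<gamma> = ev \<sigma>"
    unfolding events_def by blast
  then have "is_run N \<sigma>"
    using trace_is_run assms(1,3) unfolding well_formed_def by blast
  then have "matched_by G' \<sigma>"
    using run_matched_by_trace[OF trace_not_Nil[OF \<sigma>(1)]] assms(2,4) unfolding well_formed_def by blast
  then obtain \<tau> where "\<tau> \<in> Tr G'" "perm_eq (causal_core \<tau>) (causal_core \<sigma>)"
    unfolding matched_by_def by blast
  moreover have "ev \<tau> = ev \<sigma>"
    using calculation ev_eq_cls_causal_core[OF trace_not_Nil] \<sigma>(1) cls_eq_iff by metis
  ultimately show "\<gamma> \<in> events G'"
    using \<sigma>(2) unfolding events_def by blast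
qed

theorem mainTheorem2:
  fixes G G' :: "('p, 'l) gty" and N :: "'p \<rightharpoonup> ('p, 'l) proc"
  assumes "well_formed G" and "well_formed G'"
    and "network_ok N"
    and "typed N G" and "typed N G'"
  shows "evstruct G = evstruct G'"
proof -
  have "events G = events G'"
    using events_subset[OF assms(1,2,4,5)] events_subset[OF assms(2,1,5,4)] by blast
  then show ?thesis
    unfolding evstruct_def by simp
qed

end
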